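(* Let $d\in\mathbb{N}$, $K\in\mathbb{N}$, $K\ge 1$, let $\mathcal{G}$, $n$, $\nabla$, $\triangle_K$ be as in the context, let $f\colon\mathcal{G}\to\mathbb{R}$ be given, and let $\lambda_1,\dots,\lambda_K>0$, $\gamma>0$. Then the functional $$E(u,c,l)=\sum_{k=1}^K\sum_{j\in\mathcal{G}}u_k(j)\,|f(j)-l(j)-c_k|^2+\sum_{k=1}^K\lambda_k\,\big\|\,|\nabla u_k|\,\big\|_1+\gamma\|\nabla l\|_2^2+\iota_{\triangle_K^n}(u),$$ defined for $u=(u_k(j))_{j\in\mathcal{G},\,k=1,\dots,K}\in\mathbb{R}^{nK}$, $c=(c_1,\dots,c_K)\in\mathbb{R}^K$, $l\in\mathbb{R}^{\mathcal{G}}\cong\mathbb{R}^n$, attains its minimum, i.e. there exists $(u^*,c^*,l^* )$ with $E(u^*,c^*,l^* )=\inf_{(u,c,l)}E(u,c,l)<\infty$.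
   Context: $\mathcal{G}=\{1,\dots,n_1\}\times\dots\times\{1,\dots,n_d\}$ is a $d$-dimensional image grid with $n=n_1\cdots n_d$ pixels. For $v\colon\mathcal{G}\to\mathbb{R}$ the discrete gradient $\nabla v\colon\mathcal{G}\to\mathbb{R}^d$ uses forward differences with mirror boundary conditions: $(\nabla v)_i(j)=v(j+e_i)-v(j)$ if $j_i<n_i$ and $(\nabla v)_i(j)=0$ if $j_i=n_i$ ($e_i$ the $i$-th unit vector). $|\nabla v|(j)$ denotes the Euclidean norm of $(\nabla v)(j)\in\mathbb{R}^d$, $\|\cdot\|_1$ is the sum of absolute values over $j\in\mathcal{G}$, and $\|A\|_2$ denotes the square root of the sum of squares of all entries of an array $A$. $u_k=(u_k(j))_{j\in\mathcal{G}}$. $\triangle_K=\{v\in[0,1]^K:\sum_{k=1}^Kv_k=1\}$ is the probability simplex and $u\in\triangle_K^n$ means $(u_k(j))_{k=1}^K\in\triangle_K$ for every $j\in\mathcal{G}$. $\iota_S$ is the indicator function of a set $S$ ($0$ on $S$, $+\infty$ outside). *)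

theory Defs
  imports "HOL-Analysis.Analysis" "HOL-Library.Extended_Real"
begin

type_synonym pixel = "nat \<Rightarrow> nat"

definition grid :: "nat \<Rightarrow> (nat \<Rightarrow> nat) \<Rightarrow> pixel set" where
  "grid d ns = PiE {1..d} (\<lambda>i. {1..ns i})"

text \<open>Forward difference with mirror boundary conditions, i-th component.\<close>
definition grad :: "(nat \<Rightarrow> nat) \<Rightarrow> (pixel \<Rightarrow> real) \<Rightarrow> nat \<Rightarrow> pixel \<Rightarrow> real" where
  "grad ns v i j = (if j i < ns i then v (j(i := j i + 1)) - v j else 0)"

definition grad_abs :: "nat \<Rightarrow> (nat \<Rightarrow> nat) \<Rightarrow> (pixel \<Rightarrow> real) \<Rightarrow> pixel \<Rightarrow> real" where
  "grad_abs d ns v j = sqrt (\<Sum>i\<in>{1..d}. (grad ns v i j)\<^sup>2)"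

definition in_simplex_field :: "nat \<Rightarrow> (nat \<Rightarrow> nat) \<Rightarrow> nat \<Rightarrow> (nat \<Rightarrow> pixel \<Rightarrow> real) \<Rightarrow> bool" where
  "in_simplex_field d ns K u \<longleftrightarrow>
     (\<forall>j\<in>grid d ns. (\<forall>k\<in>{1..K}. 0 \<le> u k j \<and> u k j \<le> 1) \<and> (\<Sum>k\<in>{1..K}. u k j) = 1)"

definition energy ::
  "nat \<Rightarrow> (nat \<Rightarrow> nat) \<Rightarrow> nat \<Rightarrow> (pixel \<Rightarrow> real) \<Rightarrow> (nat \<Rightarrow> real) \<Rightarrow> real
   \<Rightarrow> (nat \<Rightarrow> pixel \<Rightarrow> real) \<Rightarrow> (nat \<Rightarrow> real) \<Rightarrow> (pixel \<Rightarrow> real) \<Rightarrow> ereal" where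
  "energy d ns K f lam \<gamma> u c l =
     (if in_simplex_field d ns K u then
        ereal ((\<Sum>k\<in>{1..K}. \<Sum>j\<in>grid d ns. u k j * \<bar>f j - l j - c k\<bar>\<^sup>2)
             + (\<Sum>k\<in>{1..K}. lam k * (\<Sum>j\<in>grid d ns. \<bar>grad_abs d ns (u k) j\<bar>))
             + \<gamma> * (\<Sum>j\<in>grid d ns. \<Sum>i\<in>{1..d}. (grad ns l i j)\<^sup>2))
      else \<infinity>)"

end

theory Submission
  imports Defs
begin

text \<open>The energy is \<open>\<infinity>\<close> off the closed set of simplex-valued fields and a continuous real
  function on it, but its domain is unbounded in \<open>c\<close> and \<open>l\<close>. Two invariances restore compactness:
  values off the grid do not enter, and \<open>(l, c) \<mapsto> (l - t, c + t)\<close> leaves the energy unchanged, so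
  \<open>l\<close> may be normalized to vanish at a corner of the grid. On a sublevel set the term
  \<open>\<gamma> \<parallel>\<nabla>l\<parallel>\<^sub>2\<^sup>2\<close> then bounds \<open>l\<close> along lattice paths from that corner, and clamping each \<open>c\<^sub>k\<close> to the
  range of \<open>f - l\<close> only lowers the data term. So the infimum is that of a continuous function over
  a compact box of states, where it is attained.\<close>

type_synonym state = "(nat \<Rightarrow> pixel \<Rightarrow> real) \<times> (nat \<Rightarrow> real) \<times> (pixel \<Rightarrow> real)"

definition data_term ::
  "nat \<Rightarrow> (nat \<Rightarrow> nat) \<Rightarrow> nat \<Rightarrow> (pixel \<Rightarrow> real) \<Rightarrow> (nat \<Rightarrow> pixel \<Rightarrow> real) \<Rightarrow> (nat \<Rightarrow> real)
   \<Rightarrow> (pixel \<Rightarrow> real) \<Rightarrow> real" where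
  "data_term d ns K f u c l = (\<Sum>k\<in>{1..K}. \<Sum>j\<in>grid d ns. u k j * \<bar>f j - l j - c k\<bar>\<^sup>2)"

definition tv_term :: "nat \<Rightarrow> (nat \<Rightarrow> nat) \<Rightarrow> nat \<Rightarrow> (nat \<Rightarrow> real) \<Rightarrow> (nat \<Rightarrow> pixel \<Rightarrow> real) \<Rightarrow> real" where
  "tv_term d ns K lam u = (\<Sum>k\<in>{1..K}. lam k * (\<Sum>j\<in>grid d ns. \<bar>grad_abs d ns (u k) j\<bar>))"

definition dirichlet_term :: "nat \<Rightarrow> (nat \<Rightarrow> nat) \<Rightarrow> (pixel \<Rightarrow> real) \<Rightarrow> real" where
  "dirichlet_term d ns l = (\<Sum>j\<in>grid d ns. \<Sum>i\<in>{1..d}. (grad ns l i j)\<^sup>2)"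

definition energy_real ::
  "nat \<Rightarrow> (nat \<Rightarrow> nat) \<Rightarrow> nat \<Rightarrow> (pixel \<Rightarrow> real) \<Rightarrow> (nat \<Rightarrow> real) \<Rightarrow> real \<Rightarrow> state \<Rightarrow> real" where
  "energy_real d ns K f lam \<gamma> x = (case x of (u, c, l) \<Rightarrow>
     data_term d ns K f u c l + tv_term d ns K lam u + \<gamma> * dirichlet_term d ns l)"

lemma energy_eq_energy_real:
  "energy d ns K f lam \<gamma> u c l =
     (if in_simplex_field d ns K u then ereal (energy_real d ns K f lam \<gamma> (u, c, l)) else \<infinity>)"
  by (simp add: energy_def energy_real_def data_term_def tv_term_def dirichlet_term_def)

lemma energy_real_ge_dirichlet:
  assumes "in_simplex_field d ns K u" "\<forall>k\<in>{1..K}. lam k \<ge> 0"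
  shows "\<gamma> * dirichlet_term d ns l \<le> energy_real d ns K f lam \<gamma> (u, c, l)"
proof -
  have "0 \<le> data_term d ns K f u c l"
    using assms(1) unfolding data_term_def
    by (intro sum_nonneg mult_nonneg_nonneg) (auto simp: in_simplex_field_def)
  moreover have "0 \<le> tv_term d ns K lam u"
    using assms(2) unfolding tv_term_def by (intro sum_nonneg mult_nonneg_nonneg) auto
  ultimately show ?thesis unfolding energy_real_def prod.case by linarith
qed

lemma dirichlet_term_nonneg: "0 \<le> dirichlet_term d ns l"
  unfolding dirichlet_term_def by (intro sum_nonneg) auto

lemma compact_PiE_UNIV:
  fixes S :: "'a \<Rightarrow> 'b::topological_space set"
  assumes "\<And>i. compact (S i)"
  shows "compact (Pi\<^sub>E UNIV S)"
proof -
  have "compactin (product_topology (\<lambda>_. euclidean) UNIV) (Pi\<^sub>E UNIV S)"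
    using assms by (subst compactin_PiE) auto
  then show ?thesis by (simp add: euclidean_product_topology)
qed

lemma continuous_on_grad:
  assumes "\<And>p. continuous_on S (\<lambda>x. v x p)"
  shows "continuous_on S (\<lambda>x. grad ns (v x) i j)"
  using assms by (cases "j i < ns i") (auto simp: grad_def intro: continuous_on_diff)

lemma continuous_on_energy_real: "continuous_on S (energy_real d ns K f lam \<gamma>)"
proof -
  note coord = continuous_on_product_then_coordinatewise
  have u: "continuous_on S (\<lambda>x::state. fst x k j)" for k j
    by (rule coord[OF coord[OF continuous_on_fst[OF continuous_on_id]]])
  have c: "continuous_on S (\<lambda>x::state. fst (snd x) k)" for k
    by (rule coord[OF continuous_on_fst[OF continuous_on_snd[OF continuous_on_id]]])
  have l: "continuous_on S (\<lambda>x::state. snd (snd x) j)" for j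
    by (rule coord[OF continuous_on_snd[OF continuous_on_snd[OF continuous_on_id]]])
  have gu: "continuous_on S (\<lambda>x::state. grad ns (fst x k) i j)" for k i j
    using u by (rule continuous_on_grad)
  have gl: "continuous_on S (\<lambda>x::state. grad ns (snd (snd x)) i j)" for i j
    using l by (rule continuous_on_grad)
  show ?thesis
    unfolding energy_real_def data_term_def tv_term_def dirichlet_term_def grad_abs_def split_def
    by (intro continuous_on_add continuous_on_mult continuous_on_sum continuous_on_const
        continuous_on_rabs continuous_on_real_sqrt continuous_on_power continuous_on_diff u c l gu gl)
qed

lemma closed_simplex_fields: "closed {u. in_simplex_field d ns K u}"
proof -
  have "{u. in_simplex_field d ns K u} =
    (\<Inter>j\<in>grid d ns. (\<Inter>k\<in>{1..K}. {u. 0 \<le> u k j} \<inter> {u. u k j \<le> 1}) \<inter> {u. (\<Sum>k\<in>{1..K}. u k j) = 1})"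
    by (auto simp: in_simplex_field_def)
  moreover have coord: "continuous_on UNIV (\<lambda>u::nat \<Rightarrow> pixel \<Rightarrow> real. u k j)" for k j
    by (rule continuous_on_product_then_coordinatewise[OF
        continuous_on_product_then_coordinatewise[OF continuous_on_id]])
  ultimately show ?thesis
    by (simp only:) (intro closed_INT closed_Int ballI closed_Collect_le closed_Collect_eq
        continuous_on_sum continuous_on_const coord)
qed

lemma finite_grid: "finite (grid d ns)"
  by (simp add: grid_def finite_PiE)

lemma grid_step:
  assumes "j \<in> grid d ns" "i \<in> {1..d}" "j i < ns i"
  shows "j(i := j i + 1) \<in> grid d ns"
  using assms by (auto simp: grid_def PiE_iff extensional_def)

lemma grad_cong:
  assumes "\<And>p. p \<in> grid d ns \<Longrightarrow> v p = w p" "j \<in> grid d ns" "i \<in> {1..d}"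
  shows "grad ns v i j = grad ns w i j"
  using assms grid_step[OF assms(2,3)] by (auto simp: grad_def)

lemma tv_term_cong:
  assumes "\<And>k j. k \<in> {1..K} \<Longrightarrow> j \<in> grid d ns \<Longrightarrow> u k j = u' k j"
  shows "tv_term d ns K lam u = tv_term d ns K lam u'"
proof -
  have "grad_abs d ns (u k) j = grad_abs d ns (u' k) j" if "k \<in> {1..K}" "j \<in> grid d ns" for k j
  proof -
    have "grad ns (u k) i j = grad ns (u' k) i j" if "i \<in> {1..d}" for i
      using assms \<open>k \<in> {1..K}\<close> \<open>j \<in> grid d ns\<close> that by (intro grad_cong) auto
    then show ?thesis unfolding grad_abs_def by (metis (no_types, lifting) sum.cong)
  qed
  then show ?thesis unfolding tv_term_def by (intro sum.cong refl) simp
qed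

lemma dirichlet_term_shift:
  assumes "\<And>j. j \<in> grid d ns \<Longrightarrow> l' j = l j - t"
  shows "dirichlet_term d ns l' = dirichlet_term d ns l"
proof -
  have "grad ns l' i j = grad ns l i j" if "j \<in> grid d ns" "i \<in> {1..d}" for i j
  proof -
    have "grad ns l' i j = grad ns (\<lambda>p. l p - t) i j"
      using assms that by (rule grad_cong)
    then show ?thesis by (simp add: grad_def)
  qed
  then show ?thesis unfolding dirichlet_term_def by (intro sum.cong refl) auto
qed

lemma abs_grad_le_sqrt_dirichlet:
  assumes "j \<in> grid d ns" "i \<in> {1..d}"
  shows "\<bar>grad ns l i j\<bar> \<le> sqrt (dirichlet_term d ns l)"
proof -
  have "(grad ns l i j)\<^sup>2 \<le> (\<Sum>i\<in>{1..d}. (grad ns l i j)\<^sup>2)"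
    using assms by (intro member_le_sum) auto
  also have "\<dots> \<le> dirichlet_term d ns l"
    unfolding dirichlet_term_def using assms finite_grid
    by (intro member_le_sum[of j _ "\<lambda>j. \<Sum>i\<in>{1..d}. (grad ns l i j)\<^sup>2"]) (auto intro: sum_nonneg)
  finally show ?thesis by (metis real_sqrt_abs real_sqrt_le_mono)
qed

definition grid_corner :: "nat \<Rightarrow> pixel" where
  "grid_corner d = (\<lambda>i. if i \<in> {1..d} then 1 else undefined)"

text \<open>Walk from the corner to \<open>j\<close> along a monotone lattice path of \<open>\<Sum>i. j i - 1\<close> unit steps.\<close>
lemma abs_diff_grid_corner_le:
  assumes "\<forall>j\<in>grid d ns. \<forall>i\<in>{1..d}. \<bar>grad ns l i j\<bar> \<le> B" "j \<in> grid d ns"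
  shows "\<bar>l j - l (grid_corner d)\<bar> \<le> B * (\<Sum>i\<in>{1..d}. j i - 1)"
proof -
  have "\<bar>l j - l (grid_corner d)\<bar> \<le> B * m"
    if "j \<in> grid d ns" "(\<Sum>i\<in>{1..d}. j i - 1) = m" for m j
    using that
  proof (induction m arbitrary: j)
    case 0
    then have "j = grid_corner d"
      by (intro ext) (auto simp: grid_def PiE_iff grid_corner_def extensional_def intro: le_antisym)
    then show ?case by simp
  next
    case (Suc m)
    have "\<exists>i\<in>{1..d}. j i - 1 \<noteq> 0"
      using Suc.prems(2) by (metis nat.distinct(1) sum.neutral)
    then obtain i where i: "i \<in> {1..d}" "2 \<le> j i"
      by force
    define j' where "j' = j(i := j i - 1)"
    have j': "j' \<in> grid d ns" "j' i < ns i"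
      using Suc.prems(1) i by (force simp: grid_def PiE_iff extensional_def j'_def)+
    have "(\<Sum>i\<in>{1..d}. j' i - 1) + 1 = (\<Sum>i\<in>{1..d}. j i - 1)"
      using i by (simp add: sum.remove[of _ i] j'_def)
    then have "\<bar>l j' - l (grid_corner d)\<bar> \<le> B * m"
      using Suc.IH j'(1) Suc.prems(2) by simp
    moreover have "grad ns l i j' = l j - l j'"
      using j'(2) i by (simp add: grad_def j'_def)
    then have "\<bar>l j - l j'\<bar> \<le> B" using assms(1) j'(1) i by force
    ultimately show ?case by (simp add: algebra_simps)
  qed
  then show ?thesis using assms(2) by blast
qed

lemma abs_diff_grid_corner_le_dirichlet:
  assumes "j \<in> grid d ns"
  shows "\<bar>l j - l (grid_corner d)\<bar> \<le> sqrt (dirichlet_term d ns l) * (\<Sum>i\<in>{1..d}. ns i)"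
proof -
  have "\<bar>l j - l (grid_corner d)\<bar> \<le> sqrt (dirichlet_term d ns l) * (\<Sum>i\<in>{1..d}. j i - 1)"
    using abs_grad_le_sqrt_dirichlet assms by (intro abs_diff_grid_corner_le) auto
  also have "\<dots> \<le> sqrt (dirichlet_term d ns l) * (\<Sum>i\<in>{1..d}. ns i)"
  proof (intro mult_left_mono of_nat_mono sum_mono)
    show "j i - 1 \<le> ns i" if "i \<in> {1..d}" for i
    proof -
      have "j i \<le> ns i" using assms that by (simp add: grid_def PiE_iff)
      then show ?thesis by simp
    qed
  qed (simp add: dirichlet_term_nonneg)
  finally show ?thesis .
qed

definition state_box :: "nat \<Rightarrow> (nat \<Rightarrow> nat) \<Rightarrow> nat \<Rightarrow> real \<Rightarrow> real \<Rightarrow> state set" where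
  "state_box d ns K R M =
     ((\<Pi>\<^sub>E k\<in>UNIV. \<Pi>\<^sub>E j\<in>UNIV. if k \<in> {1..K} \<and> j \<in> grid d ns then {0..1} else {0})
        \<inter> {u. in_simplex_field d ns K u})
     \<times> (\<Pi>\<^sub>E k\<in>UNIV. if k \<in> {1..K} then {-R..R} else {0})
     \<times> (\<Pi>\<^sub>E j\<in>UNIV. if j \<in> grid d ns then {-M..M} else {0})"

lemma compact_state_box: "compact (state_box d ns K R M)"
  unfolding state_box_def
  by (intro compact_Times compact_Int_closed closed_simplex_fields compact_PiE_UNIV) auto

lemma abs_diff_clamp_le:
  fixes a x R :: real
  assumes "\<bar>a\<bar> \<le> R"
  shows "\<bar>a - max (-R) (min R x)\<bar> \<le> \<bar>a - x\<bar>"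
  using assms by (auto simp: max_def min_def abs_le_iff)

lemma reduce_to_state_box:
  fixes f :: "pixel \<Rightarrow> real"
  assumes "in_simplex_field d ns K u" "dirichlet_term d ns l \<le> D"
  defines "M \<equiv> sqrt D * (\<Sum>i\<in>{1..d}. ns i)"
  defines "R \<equiv> (\<Sum>j\<in>grid d ns. \<bar>f j\<bar>) + M"
  shows "\<exists>y\<in>state_box d ns K R M. energy_real d ns K f lam \<gamma> y \<le> energy_real d ns K f lam \<gamma> (u, c, l)"
proof -
  define t where "t = l (grid_corner d)"
  define u' where "u' k j = (if k \<in> {1..K} \<and> j \<in> grid d ns then u k j else 0)" for k j
  define l' where "l' j = (if j \<in> grid d ns then l j - t else 0)" for j
  define c' where "c' k = (if k \<in> {1..K} then max (-R) (min R (c k + t)) else 0)" for k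
  have M: "\<bar>l j - t\<bar> \<le> M" if "j \<in> grid d ns" for j
  proof -
    have "\<bar>l j - t\<bar> \<le> sqrt (dirichlet_term d ns l) * (\<Sum>i\<in>{1..d}. ns i)"
      unfolding t_def using that by (rule abs_diff_grid_corner_le_dirichlet)
    also have "\<dots> \<le> M"
      unfolding M_def using assms(2) by (intro mult_right_mono) (auto intro: sum_nonneg)
    finally show ?thesis .
  qed
  have "0 \<le> M"
    unfolding M_def using order_trans[OF dirichlet_term_nonneg assms(2)] by (simp del: of_nat_sum)
  have R: "\<bar>f j - l' j\<bar> \<le> R" if "j \<in> grid d ns" for j
  proof -
    have "\<bar>f j\<bar> \<le> (\<Sum>j\<in>grid d ns. \<bar>f j\<bar>)"
      using that finite_grid by (intro member_le_sum) auto
    then show ?thesis using M[OF that] that by (simp add: l'_def R_def)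
  qed
  have "0 \<le> R"
    unfolding R_def using \<open>0 \<le> M\<close> by (simp add: sum_nonneg)
  have "(u', c', l') \<in> state_box d ns K R M"
    using assms(1) M \<open>0 \<le> M\<close> \<open>0 \<le> R\<close>
    by (force simp: state_box_def in_simplex_field_def u'_def c'_def l'_def abs_le_iff)
  moreover have "data_term d ns K f u' c' l' \<le> data_term d ns K f u c l"
    unfolding data_term_def
  proof (intro sum_mono)
    fix k j assume "k \<in> {1..K}" "j \<in> grid d ns"
    then have "\<bar>f j - l' j - c' k\<bar> \<le> \<bar>f j - l j - c k\<bar>"
      using abs_diff_clamp_le[OF R, of j "c k + t"] by (simp add: c'_def l'_def algebra_simps)
    then have "\<bar>f j - l' j - c' k\<bar>\<^sup>2 \<le> \<bar>f j - l j - c k\<bar>\<^sup>2"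
      by (metis abs_ge_zero power_mono)
    moreover have "0 \<le> u k j"
      using assms(1) \<open>k \<in> {1..K}\<close> \<open>j \<in> grid d ns\<close> by (auto simp: in_simplex_field_def)
    ultimately show "u' k j * \<bar>f j - l' j - c' k\<bar>\<^sup>2 \<le> u k j * \<bar>f j - l j - c k\<bar>\<^sup>2"
      using \<open>k \<in> {1..K}\<close> \<open>j \<in> grid d ns\<close> by (simp add: u'_def mult_left_mono)
  qed
  moreover have "tv_term d ns K lam u' = tv_term d ns K lam u"
    by (rule tv_term_cong) (simp add: u'_def)
  moreover have "dirichlet_term d ns l' = dirichlet_term d ns l"
    by (rule dirichlet_term_shift) (simp add: l'_def)
  ultimately show ?thesis
    by (intro bexI[of _ "(u', c', l')"]) (auto simp: energy_real_def)
qed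

lemma reduce_sublevel_to_state_box:
  fixes f :: "pixel \<Rightarrow> real"
  assumes "\<forall>k\<in>{1..K}. lam k \<ge> 0" "\<gamma> > 0" "in_simplex_field d ns K u"
    and "energy_real d ns K f lam \<gamma> (u, c, l) \<le> E"
  defines "M \<equiv> sqrt (E / \<gamma>) * (\<Sum>i\<in>{1..d}. ns i)"
  defines "R \<equiv> (\<Sum>j\<in>grid d ns. \<bar>f j\<bar>) + M"
  shows "\<exists>y\<in>state_box d ns K R M. energy_real d ns K f lam \<gamma> y \<le> energy_real d ns K f lam \<gamma> (u, c, l)"
proof -
  have "\<gamma> * dirichlet_term d ns l \<le> E"
    using energy_real_ge_dirichlet[OF assms(3,1)] assms(4) by (rule order_trans)
  then have "dirichlet_term d ns l \<le> E / \<gamma>"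
    using assms(2) by (simp add: field_simps)
  with assms(3) show ?thesis
    unfolding M_def R_def by (rule reduce_to_state_box)
qed

lemma continuous_attains_inf_on_reduction:
  fixes G :: "'a::topological_space \<Rightarrow> real"
  assumes "compact S" "continuous_on S G" "S \<subseteq> F" "x0 \<in> F"
    and "\<And>x. x \<in> F \<Longrightarrow> G x \<le> G x0 \<Longrightarrow> \<exists>y\<in>S. G y \<le> G x"
  shows "\<exists>m\<in>S. \<forall>x\<in>F. G m \<le> G x"
proof -
  obtain y0 where "y0 \<in> S" "G y0 \<le> G x0"
    using assms(4,5) by blast
  then obtain m where "m \<in> S" and minimal: "\<And>y. y \<in> S \<Longrightarrow> G m \<le> G y"
    using continuous_attains_inf[OF assms(1) _ assms(2)] by blast
  have "G m \<le> G x" if "x \<in> F" for x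
  proof (cases "G x \<le> G x0")
    case True
    then show ?thesis using assms(5)[OF that] minimal by force
  next
    case False
    then show ?thesis using minimal[OF \<open>y0 \<in> S\<close>] \<open>G y0 \<le> G x0\<close> by linarith
  qed
  then show ?thesis using \<open>m \<in> S\<close> by blast
qed

lemma energy_attains_INF_of_minimizer:
  assumes "in_simplex_field d ns K u\<^sub>m"
    and "\<And>u c l. in_simplex_field d ns K u \<Longrightarrow>
           energy_real d ns K f lam \<gamma> (u\<^sub>m, c\<^sub>m, l\<^sub>m) \<le> energy_real d ns K f lam \<gamma> (u, c, l)"
  shows "energy d ns K f lam \<gamma> u\<^sub>m c\<^sub>m l\<^sub>m = (INF (u, c, l) \<in> UNIV. energy d ns K f lam \<gamma> u c l)
         \<and> (INF (u, c, l) \<in> UNIV. energy d ns K f lam \<gamma> u c l) < \<infinity>"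
proof -
  have "energy d ns K f lam \<gamma> u\<^sub>m c\<^sub>m l\<^sub>m \<le> energy d ns K f lam \<gamma> u c l" for u c l
    using assms by (cases "in_simplex_field d ns K u") (auto simp: energy_eq_energy_real)
  then have "energy d ns K f lam \<gamma> u\<^sub>m c\<^sub>m l\<^sub>m = (INF (u, c, l) \<in> UNIV. energy d ns K f lam \<gamma> u c l)"
    by (intro antisym INF_greatest INF_lower2[of "(u\<^sub>m, c\<^sub>m, l\<^sub>m)"]) auto
  moreover have "energy d ns K f lam \<gamma> u\<^sub>m c\<^sub>m l\<^sub>m < \<infinity>"
    using assms(1) by (simp add: energy_eq_energy_real)
  ultimately show ?thesis by simp
qed

theorem mainTheorem1:
  fixes d K :: nat and ns :: "nat \<Rightarrow> nat" and f :: "pixel \<Rightarrow> real"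
    and lam :: "nat \<Rightarrow> real" and \<gamma> :: real
  assumes "K \<ge> 1"
    and "\<forall>k\<in>{1..K}. lam k > 0"
    and "\<gamma> > 0"
  shows "\<exists>u c l. energy d ns K f lam \<gamma> u c l
                  = (INF (u, c, l) \<in> UNIV. energy d ns K f lam \<gamma> u c l)
               \<and> (INF (u, c, l) \<in> UNIV. energy d ns K f lam \<gamma> u c l) < \<infinity>"
proof -
  define G where "G = energy_real d ns K f lam \<gamma>"
  define F where "F = {x :: state. in_simplex_field d ns K (fst x)}"
  define u0 :: "nat \<Rightarrow> pixel \<Rightarrow> real" where "u0 k j = (if k = 1 then 1 else 0)" for k j
  define x0 :: state where "x0 = (u0, \<lambda>_. 0, \<lambda>_. 0)"
  define M where "M = sqrt (G x0 / \<gamma>) * (\<Sum>i\<in>{1..d}. ns i)"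
  define R where "R = (\<Sum>j\<in>grid d ns. \<bar>f j\<bar>) + M"
  have "x0 \<in> F"
    using assms(1) by (simp add: F_def x0_def in_simplex_field_def u0_def sum.delta)
  moreover have "state_box d ns K R M \<subseteq> F"
    by (auto simp: state_box_def F_def)
  moreover have "\<exists>y\<in>state_box d ns K R M. G y \<le> G x" if "x \<in> F" "G x \<le> G x0" for x
    using that assms(2,3) reduce_sublevel_to_state_box[of K lam \<gamma> d ns "fst x"]
    unfolding G_def F_def M_def R_def by (cases x) force
  ultimately obtain m where "m \<in> F" and minimal: "\<forall>x\<in>F. G m \<le> G x"
    using continuous_attains_inf_on_reduction[OF compact_state_box continuous_on_energy_real]
    unfolding G_def by blast
  obtain u c l where m: "m = (u, c, l)" by (rule prod_cases3)
  have "energy d ns K f lam \<gamma> u c l = (INF (u, c, l) \<in> UNIV. energy d ns K f lam \<gamma> u c l)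
        \<and> (INF (u, c, l) \<in> UNIV. energy d ns K f lam \<gamma> u c l) < \<infinity>"
    using \<open>m \<in> F\<close> minimal unfolding m F_def G_def by (intro energy_attains_INF_of_minimizer) auto
  then show ?thesis by blast
qed

end
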